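(* Let $(X,d_X)$ and $(Y,d_Y)$ be ultrametric spaces and let $d$ be a partial distance-preserving metric on $X\times Y$ with $d_\infty\le d$. Suppose that $\mathcal N_\varepsilon(W\times Z)=\mathcal N_\varepsilon(W)\cdot\mathcal N_\varepsilon(Z)$ for all compact sets $W\subseteq X$, $Z\subseteq Y$ and every $\varepsilon>0$ (quantities computed in $(X,d_X)$, $(Y,d_Y)$, $(X\times Y,d)$ respectively). Then for all $x_1,x_2\in X$ and $y_1,y_2\in Y$, $$\min\{d((x_1,y_1),(x_2,y_2)),\,d((x_2,y_1),(x_1,y_2))\}=\max\{d_X(x_1,x_2),d_Y(y_1,y_2)\}.$$
   Context: $d_\infty((x_1,y_1),(x_2,y_2))=\max\{d_X(x_1,x_2),d_Y(y_1,y_2)\}$. A metric $d$ on $X\times Y$ is partial distance-preserving if $d((x_1,y),(x_2,y))=d_X(x_1,x_2)$ and $d((x,y_1),(x,y_2))=d_Y(y_1,y_2)$ for all $x,x_1,x_2\in X$, $y,y_1,y_2\in Y$. Ultrametric: $\rho(a,b)\le\max\{\rho(a,c),\rho(c,b)\}$. In a metric space $(M,\rho)$ with closed balls $B(c,r)=\{x:\rho(x,c)\le r\}$, $C$ is an $\varepsilon$-net for $V$ if $V\subseteq\bigcup_{c\in C}B(c,\varepsilon)$, and for totally bounded $V$ the covering number $\mathcal N_\varepsilon(V)$ is the smallest cardinality of a subset of $V$ that is an $\varepsilon$-net for $V$. *)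

theory Defs
  imports "HOL-Analysis.Analysis"
begin

definition ultrametric :: "'a set \<Rightarrow> ('a \<Rightarrow> 'a \<Rightarrow> real) \<Rightarrow> bool" where
  "ultrametric M d \<longleftrightarrow> Metric_space M d \<and>
     (\<forall>a\<in>M. \<forall>b\<in>M. \<forall>c\<in>M. d a b \<le> max (d a c) (d c b))"

definition is_net :: "'a set \<Rightarrow> ('a \<Rightarrow> 'a \<Rightarrow> real) \<Rightarrow> real \<Rightarrow> 'a set \<Rightarrow> 'a set \<Rightarrow> bool" where
  "is_net M d eps V C \<longleftrightarrow> V \<subseteq> (\<Union>c\<in>C. Metric_space.mcball M d c eps)"

definition covering_number :: "'a set \<Rightarrow> ('a \<Rightarrow> 'a \<Rightarrow> real) \<Rightarrow> real \<Rightarrow> 'a set \<Rightarrow> nat" where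
  "covering_number M d eps V =
     (LEAST n. \<exists>C. C \<subseteq> V \<and> finite C \<and> card C = n \<and> is_net M d eps V C)"

definition partial_distance_preserving ::
  "'a set \<Rightarrow> ('a \<Rightarrow> 'a \<Rightarrow> real) \<Rightarrow> 'b set \<Rightarrow> ('b \<Rightarrow> 'b \<Rightarrow> real)
     \<Rightarrow> ('a \<times> 'b \<Rightarrow> 'a \<times> 'b \<Rightarrow> real) \<Rightarrow> bool" where
  "partial_distance_preserving X dX Y dY d \<longleftrightarrow>
     (\<forall>x1\<in>X. \<forall>x2\<in>X. \<forall>y\<in>Y. d (x1, y) (x2, y) = dX x1 x2) \<and>
     (\<forall>x\<in>X. \<forall>y1\<in>Y. \<forall>y2\<in>Y. d (x, y1) (x, y2) = dY y1 y2)"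

end

theory Submission
  imports Defs
begin

text \<open>
  The inequality max (dX x1 x2) (dY y1 y2) \<le> min of the two diagonals is
  immediate from the hypothesis that d dominates the sup-metric.  For the converse, fix
  eps > max (dX x1 x2) (dY y1 y2) and
  consider the finite (hence compact) sets W = {x1, x2} and Z = {y1, y2}.  Each of them lies
  in a single eps-ball, so its covering number is at most 1; by the multiplicativity hypothesis
  the "square" W \<times> Z also has covering number at most 1, i.e. some corner c of the square
  is within eps of all four corners.  Whichever corner c is, its opposite corner realises one
  of the two diagonals, so the smaller diagonal is at most eps.  Letting eps decrease to
  max (dX x1 x2) (dY y1 y2) gives the claim.
\<close>

lemma covering_number_le_card:
  assumes "C \<subseteq> V" "finite C" "is_net M d eps V C"
  shows "covering_number M d eps V \<le> card C"
  unfolding covering_number_def using assms by (intro Least_le) blast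

lemma covering_number_pair_le_one:
  assumes "Metric_space M d" "a \<in> M" "b \<in> M" "d a b \<le> eps"
  shows "covering_number M d eps {a, b} \<le> 1"
proof -
  interpret Metric_space M d by fact
  have "0 \<le> eps" using assms nonneg order_trans by blast
  then have "is_net M d eps {a, b} {a}"
    using assms unfolding is_net_def by (auto simp: in_mcball)
  then show ?thesis
    using covering_number_le_card[of "{a}" "{a, b}"] by simp
qed

text \<open>Finiteness guarantees that some net exists (the set
  itself), so the least cardinality is attained.\<close>
lemma covering_number_le_one_center:
  assumes "Metric_space M d" "finite V" "V \<subseteq> M" "V \<noteq> {}" "0 \<le> eps"
    and "covering_number M d eps V \<le> 1"
  shows "\<exists>c\<in>V. \<forall>p\<in>V. d c p \<le> eps"
proof -
  interpret Metric_space M d by fact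
  have self_net: "is_net M d eps V V"
    using assms(3,5) unfolding is_net_def by (fastforce simp: in_mcball)
  have "\<exists>C. C \<subseteq> V \<and> finite C \<and> card C = covering_number M d eps V \<and> is_net M d eps V C"
    unfolding covering_number_def by (rule LeastI_ex) (use assms(2) self_net in blast)
  then obtain C where C: "C \<subseteq> V" "finite C" "card C \<le> 1" "is_net M d eps V C"
    using assms(6) by auto
  have "C \<noteq> {}" using C(4) assms(4) unfolding is_net_def by auto
  with C(2,3) have "card C = 1" by (simp add: card_gt_0_iff le_antisym Suc_le_eq)
  then obtain c where "C = {c}" by (rule card_1_singletonE)
  with C(1,4) have c: "c \<in> V" "V \<subseteq> mcball c eps"
    unfolding is_net_def by auto
  show ?thesis
  proof (intro bexI ballI)
    fix p assume "p \<in> V"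
    with c(2) have "p \<in> mcball c eps" by blast
    then show "d c p \<le> eps" by simp
  qed (fact c(1))
qed

text \<open>A square {x1, x2} \<times> {y1, y2} with a centre among its corners: the centre's opposite
  corner lies on a diagonal, so the smaller of the two diagonals is at most the radius.\<close>
lemma square_center_bounds_diagonal:
  assumes "Metric_space (X \<times> Y) d" "x1 \<in> X" "x2 \<in> X" "y1 \<in> Y" "y2 \<in> Y"
    and "c \<in> {x1, x2} \<times> {y1, y2}" "\<forall>p \<in> {x1, x2} \<times> {y1, y2}. d c p \<le> eps"
  shows "min (d (x1, y1) (x2, y2)) (d (x2, y1) (x1, y2)) \<le> eps"
proof -
  interpret Metric_space "X \<times> Y" d by fact
  have diag1: "d (x2, y2) (x1, y1) = d (x1, y1) (x2, y2)"
    and diag2: "d (x1, y2) (x2, y1) = d (x2, y1) (x1, y2)"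
    by (rule commute)+
  from assms(6) consider "c = (x1, y1)" | "c = (x2, y2)" | "c = (x2, y1)" | "c = (x1, y2)"
    by blast
  then show ?thesis
  proof cases
    case 1 with assms(7) show ?thesis by (simp add: min.coboundedI1)
  next
    case 2 with assms(7) diag1 show ?thesis by (simp add: min.coboundedI1)
  next
    case 3 with assms(7) show ?thesis by (simp add: min.coboundedI2)
  next
    case 4 with assms(7) diag2 show ?thesis by (simp add: min.coboundedI2)
  qed
qed

lemma square_covering_number_le_one_bounds_diagonal:
  assumes "Metric_space (X \<times> Y) d" "x1 \<in> X" "x2 \<in> X" "y1 \<in> Y" "y2 \<in> Y" "0 \<le> eps"
    and "covering_number (X \<times> Y) d eps ({x1, x2} \<times> {y1, y2}) \<le> 1"
  shows "min (d (x1, y1) (x2, y2)) (d (x2, y1) (x1, y2)) \<le> eps"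
proof -
  have "finite ({x1, x2} \<times> {y1, y2})" "{x1, x2} \<times> {y1, y2} \<subseteq> X \<times> Y"
    "{x1, x2} \<times> {y1, y2} \<noteq> {}"
    using assms(2-5) by auto
  then obtain c where "c \<in> {x1, x2} \<times> {y1, y2}"
    "\<forall>p \<in> {x1, x2} \<times> {y1, y2}. d c p \<le> eps"
    using covering_number_le_one_center[OF assms(1) _ _ _ assms(6,7)] by meson
  then show ?thesis
    using square_center_bounds_diagonal[OF assms(1-5)] by blast
qed

lemma sup_metric_le_diagonals:
  assumes "Metric_space X dX" "x1 \<in> X" "x2 \<in> X" "y1 \<in> Y" "y2 \<in> Y"
    and dinf: "\<And>x1 x2 y1 y2. x1 \<in> X \<Longrightarrow> x2 \<in> X \<Longrightarrow> y1 \<in> Y \<Longrightarrow> y2 \<in> Y \<Longrightarrow>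
                 max (dX x1 x2) (dY y1 y2) \<le> d (x1, y1) (x2, y2)"
  shows "max (dX x1 x2) (dY y1 y2) \<le> min (d (x1, y1) (x2, y2)) (d (x2, y1) (x1, y2))"
  using dinf[of x1 x2 y1 y2] dinf[of x2 x1 y1 y2] assms(2-5)
    Metric_space.commute[OF assms(1), of x1 x2] by simp

theorem proposition4p7:
  fixes X :: "'a set" and dX :: "'a \<Rightarrow> 'a \<Rightarrow> real"
    and Y :: "'b set" and dY :: "'b \<Rightarrow> 'b \<Rightarrow> real"
    and d :: "'a \<times> 'b \<Rightarrow> 'a \<times> 'b \<Rightarrow> real"
  assumes uX: "ultrametric X dX"
    and uY: "ultrametric Y dY"
    and md: "Metric_space (X \<times> Y) d"
    and pdp: "partial_distance_preserving X dX Y dY d"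
    and dinf: "\<And>x1 x2 y1 y2. x1 \<in> X \<Longrightarrow> x2 \<in> X \<Longrightarrow> y1 \<in> Y \<Longrightarrow> y2 \<in> Y \<Longrightarrow>
                 max (dX x1 x2) (dY y1 y2) \<le> d (x1, y1) (x2, y2)"
    and cov: "\<And>W Z eps. compactin (Metric_space.mtopology X dX) W \<Longrightarrow>
                 compactin (Metric_space.mtopology Y dY) Z \<Longrightarrow> eps > 0 \<Longrightarrow>
                 covering_number (X \<times> Y) d eps (W \<times> Z) =
                   covering_number X dX eps W * covering_number Y dY eps Z"
    and x: "x1 \<in> X" "x2 \<in> X" and y: "y1 \<in> Y" "y2 \<in> Y"
  shows "min (d (x1, y1) (x2, y2)) (d (x2, y1) (x1, y2)) = max (dX x1 x2) (dY y1 y2)"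
proof (rule antisym)
  have mX: "Metric_space X dX" and mY: "Metric_space Y dY"
    using uX uY unfolding ultrametric_def by auto
  show "max (dX x1 x2) (dY y1 y2) \<le> min (d (x1, y1) (x2, y2)) (d (x2, y1) (x1, y2))"
    using sup_metric_le_diagonals[OF mX x y] dinf by blast
  show "min (d (x1, y1) (x2, y2)) (d (x2, y1) (x1, y2)) \<le> max (dX x1 x2) (dY y1 y2)"
  proof (rule dense_ge)
    fix eps assume eps: "max (dX x1 x2) (dY y1 y2) < eps"
    then have "0 < eps" using Metric_space.nonneg[OF mX] by (meson le_less_trans max.cobounded1)
    have compact: "compactin (Metric_space.mtopology X dX) {x1, x2}"
      "compactin (Metric_space.mtopology Y dY) {y1, y2}"
      using x y by (auto intro!: finite_imp_compactin
          simp: Metric_space.topspace_mtopology[OF mX] Metric_space.topspace_mtopology[OF mY])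
    have "covering_number X dX eps {x1, x2} \<le> 1"
      using covering_number_pair_le_one[OF mX x] eps by simp
    moreover have "covering_number Y dY eps {y1, y2} \<le> 1"
      using covering_number_pair_le_one[OF mY y] eps by simp
    ultimately have "covering_number (X \<times> Y) d eps ({x1, x2} \<times> {y1, y2}) \<le> 1"
      unfolding cov[OF compact \<open>0 < eps\<close>] using mult_le_mono by fastforce
    then show "min (d (x1, y1) (x2, y2)) (d (x2, y1) (x1, y2)) \<le> eps"
      using square_covering_number_le_one_bounds_diagonal[OF md x y] \<open>0 < eps\<close> by simp
  qed
qed

end
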